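(* Let $n\geq1$, $p<-n-1$, $\gamma=\frac{p+n+1}{n+1}<0$, and $\psi(r)=\frac{(1+r^2)^{\frac{n+1}{2}}}{r^n}$ for $r>0$. Let $\varphi:[0,\infty)\to[0,\infty)$ be continuous, positive on $(0,\infty)$, with $\lim_{r\to\infty}\varphi(r)=\varphi_\infty\in(0,\infty)$, and decaying to zero rapidly as $r\to0$, in the sense that $M:=\int_0^1\frac{\varphi(r)}{r}\psi(r)^{-\gamma}\,dr<\infty$. Let $\beta>M$ and define $$f(r)=\psi(r)^{\gamma}\Big[\int_1^r\frac{\varphi(s)}{s}\psi(s)^{-\gamma}\,ds+\beta\Big],\qquad r\in(0,\infty).$$ Then $f$ is $C^1$ on $(0,\infty)$, $f(r)>0$ for all $r\in(0,\infty)$, $\lim_{r\to0}f(r)=0$ (so $f$ extends continuously with $f(0)=0$), and $\lim_{r\to\infty}f(r)=\frac{\varphi_\infty}{|\gamma|}$. *)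

theory Defs
  imports "HOL-Analysis.Analysis"
begin

definition psi :: "nat \<Rightarrow> real \<Rightarrow> real" where
  "psi n r = (1 + r\<^sup>2) powr ((real n + 1) / 2) / r ^ n"

end

theory Submission
  imports Defs "HOL-Real_Asymp.Real_Asymp"
begin

(* Write f = \<psi>^\<gamma> (G + \<beta>) with G(r) = \<integral>_1^r \<phi>(s) \<psi>(s)^(-\<gamma>) / s ds.
   Since \<psi>(r) \<ge> r, and \<psi>(r) \<ge> 1/r on (0,1] when n \<ge> 1, \<psi> tends to \<infinity> at both
   ends of (0,\<infinity>), so \<psi>^\<gamma> tends to 0 there because \<gamma> < 0.  As the integrand is
   nonnegative, G + \<beta> lies in [\<beta> - M, \<beta>] on (0,1] and in [\<beta>, \<infinity>) on [1,\<infinity>); this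
   gives positivity and the limit at 0.  At \<infinity>, L'Hopital's rule for (G + \<beta>) / \<psi>^(-\<gamma>)
   reduces the limit to \<phi>(r) / (|\<gamma>| r \<psi>'(r)/\<psi>(r)) = \<phi>(r) (1 + r^2) / (|\<gamma>| (r^2 - n)),
   which tends to \<phi>_\<infinity> / |\<gamma>|. *)

definition psi_log_deriv :: "nat \<Rightarrow> real \<Rightarrow> real" where
  "psi_log_deriv n r = (r\<^sup>2 - real n) / (r * (1 + r\<^sup>2))"

lemma psi_pos:
  assumes "r > 0"
  shows "psi n r > 0"
proof -
  have "0 < 1 + r\<^sup>2" by (simp add: add_pos_nonneg)
  then show ?thesis using assms unfolding psi_def by simp
qed

lemma ln_psi:
  assumes "r > 0"
  shows "ln (psi n r) = (real n + 1) / 2 * ln (1 + r\<^sup>2) - real n * ln r"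
proof -
  have "0 < 1 + r\<^sup>2" by (simp add: add_pos_nonneg)
  then show ?thesis using assms unfolding psi_def by (simp add: ln_div ln_powr ln_realpow)
qed

lemma has_real_derivative_psi_powr:
  assumes "r > 0"
  shows "((\<lambda>r. psi n r powr c) has_real_derivative c * psi_log_deriv n r * psi n r powr c) (at r)"
proof -
  define L where "L r = (real n + 1) / 2 * ln (1 + r\<^sup>2) - real n * ln r" for r
  have pos: "0 < 1 + r\<^sup>2" by (simp add: add_pos_nonneg)
  have psi_powr_eq: "psi n x powr c = exp (c * L x)" if "x > 0" for x
    using that psi_pos[OF that, of n] by (simp add: powr_def ln_psi L_def)
  have "(L has_real_derivative (real n + 1) / 2 * (2 * r / (1 + r\<^sup>2)) - real n / r) (at r)"
    unfolding L_def using assms pos by (auto intro!: derivative_eq_intros) (simp add: field_simps)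
  also have "(real n + 1) / 2 * (2 * r / (1 + r\<^sup>2)) - real n / r = psi_log_deriv n r"
    unfolding psi_log_deriv_def using assms pos
    by (simp add: divide_simps) (simp add: algebra_simps power2_eq_square)
  finally have "((\<lambda>r. exp (c * L r)) has_real_derivative exp (c * L r) * (c * psi_log_deriv n r)) (at r)"
    by (rule DERIV_fun_exp[OF DERIV_cmult])
  then have "((\<lambda>r. exp (c * L r)) has_real_derivative c * psi_log_deriv n r * psi n r powr c) (at r)"
    using psi_powr_eq[OF assms] by (simp add: mult.commute)
  then show ?thesis
    by (rule has_field_derivative_transform_within_open[of _ _ _ "{0<..}"])
       (use assms psi_powr_eq in auto)
qed

lemma continuous_on_psi_powr: "continuous_on {0<..} (\<lambda>r. psi n r powr c)"
proof (intro continuous_at_imp_continuous_on ballI)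
  fix r :: real assume "r \<in> {0<..}"
  then show "isCont (\<lambda>r. psi n r powr c) r"
    using has_real_derivative_psi_powr[of r n c] by (auto intro: DERIV_isCont)
qed

lemma continuous_on_psi_log_deriv: "continuous_on {0<..} (psi_log_deriv n)"
  unfolding psi_log_deriv_def[abs_def]
  by (intro continuous_intros) (auto simp: add_nonneg_eq_0_iff)

lemma psi_log_deriv_pos: "0 < r \<Longrightarrow> real n < r\<^sup>2 \<Longrightarrow> 0 < psi_log_deriv n r"
  unfolding psi_log_deriv_def by (simp add: add_pos_nonneg)

lemma eventually_pos_square_gt_at_top: "\<forall>\<^sub>F r in at_top. 0 < r \<and> c < (r::real)\<^sup>2"
  using eventually_ge_at_top[of "\<bar>c\<bar> + 1"]
proof eventually_elim
  case (elim r)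
  then have "c < r * 1" by simp
  also have "\<dots> \<le> r * r" using elim by (intro mult_left_mono) auto
  finally show ?case using elim by (simp add: power2_eq_square)
qed

lemma psi_ge_self:
  assumes "r > 0"
  shows "r \<le> psi n r"
proof -
  have "r * r ^ n = r powr (real n + 1)"
    using assms powr_realpow[of r "n + 1"] by (simp add: add.commute)
  also have "\<dots> = r powr (2 * ((real n + 1) / 2))"
    by (rule arg_cong[where f = "(powr) r"]) (simp add: field_simps)
  also have "\<dots> = (r\<^sup>2) powr ((real n + 1) / 2)"
    using assms by (simp add: powr_powr flip: powr_numeral)
  also have "\<dots> \<le> (1 + r\<^sup>2) powr ((real n + 1) / 2)"
    by (rule powr_mono2) auto
  finally show ?thesis
    using assms unfolding psi_def by (simp add: pos_le_divide_eq)
qed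

lemma psi_ge_inverse:
  assumes "n \<ge> 1" "0 < r" "r \<le> 1"
  shows "1 / r \<le> psi n r"
proof -
  have "r ^ n \<le> r"
    using power_decreasing[of 1 n r] assms by simp
  also have "r \<le> r * (1 + r\<^sup>2) powr ((real n + 1) / 2)"
    using assms by (simp add: ge_one_powr_ge_zero)
  finally show ?thesis
    using assms unfolding psi_def by (simp add: divide_simps mult.commute)
qed

lemma filterlim_psi_at_top: "filterlim (psi n) at_top at_top"
proof (rule filterlim_at_top_mono[OF filterlim_ident])
  show "\<forall>\<^sub>F r in at_top. r \<le> psi n r"
    using eventually_gt_at_top[of 0] by eventually_elim (rule psi_ge_self)
qed

lemma filterlim_psi_at_right_0:
  assumes "n \<ge> 1"
  shows "filterlim (psi n) at_top (at_right 0)"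
proof (rule filterlim_at_top_mono[OF filterlim_inverse_at_top_right])
  have "\<forall>\<^sub>F r in at_right 0. r \<in> {0<..<1::real}"
    by (rule eventually_at_right_real) simp
  then show "\<forall>\<^sub>F r in at_right 0. inverse r \<le> psi n r"
    by eventually_elim (use psi_ge_inverse[OF assms] in \<open>simp add: inverse_eq_divide\<close>)
qed

lemma has_real_derivative_interval_integral:
  fixes g :: "real \<Rightarrow> real" and a c r :: real
  assumes cont: "continuous_on {a<..} g" and "a < c" "a < r"
  shows "((\<lambda>u. LBINT s=c..u. g s) has_real_derivative g r) (at r)"
proof -
  define d where "d = (a + min c r) / 2"
  define e where "e = max c r + 1"
  have d: "a < d" "d < c" "d < r" and e: "c < e" "r < e"
    using assms unfolding d_def e_def by auto
  have "continuous_on {d..e} g"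
    by (rule continuous_on_subset[OF cont]) (use d in auto)
  then have "((\<lambda>u. LBINT s=c..u. g s) has_vector_derivative g r) (at r within {d..e})"
    by (rule interval_integral_FTC2[rotated 2]) (use d e in auto)
  then have "((\<lambda>u. LBINT s=c..u. g s) has_vector_derivative g r) (at r)"
    using d e by (auto simp: has_vector_derivative_within_open[of r "{d<..<e}", symmetric]
                       intro: has_vector_derivative_within_subset)
  then show ?thesis
    by (simp add: has_real_derivative_iff_has_vector_derivative)
qed

lemma interval_integral_from_one_bounds:
  fixes g :: "real \<Rightarrow> real" and r :: real
  assumes cont: "continuous_on {0<..} g" and nonneg: "\<And>s. 0 \<le> s \<Longrightarrow> 0 \<le> g s"
    and int: "g integrable_on {0..1}" and r: "0 < r"
  shows "- integral {0..1} g \<le> (LBINT s=1..r. g s)"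
    and "r \<le> 1 \<Longrightarrow> (LBINT s=1..r. g s) \<le> 0"
proof -
  have cont_ab: "continuous_on {a..b} g" if "0 < a" for a b
    by (rule continuous_on_subset[OF cont]) (use that in auto)
  have integral_ab_nonneg: "0 \<le> integral {a..b} g" if "0 < a" for a b
  proof (rule integral_nonneg)
    show "g integrable_on {a..b}"
      by (rule integrable_continuous_interval[OF cont_ab[OF that]])
  qed (use that nonneg in auto)
  have below_one: "(LBINT s=1..r. g s) = - integral {r..1} g" if "r \<le> 1"
    using interval_integral_eq_integral[OF that borel_integrable_atLeastAtMost'[OF cont_ab[OF r]]]
      interval_integral_endpoints_reverse[of 1 r g]
    by (simp add: one_ereal_def)
  show "r \<le> 1 \<Longrightarrow> (LBINT s=1..r. g s) \<le> 0"
    using below_one integral_ab_nonneg[OF r] by simp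
  show "- integral {0..1} g \<le> (LBINT s=1..r. g s)"
  proof (cases "r \<le> 1")
    case True
    have "integral {r..1} g \<le> integral {0..1} g"
    proof (rule integral_subset_le)
      show "g integrable_on {r..1}"
        by (rule integrable_continuous_interval[OF cont_ab[OF r]])
    qed (use r int nonneg in auto)
    then show ?thesis
      using below_one[OF True] by simp
  next
    case False
    then have "(LBINT s=1..r. g s) = integral {1..r} g"
      using interval_integral_eq_integral[of 1 r g] borel_integrable_atLeastAtMost'[OF cont_ab[of 1 r]]
      by (simp add: one_ereal_def)
    moreover have "0 \<le> integral {0..1} g"
      using int nonneg by (intro integral_nonneg) auto
    ultimately show ?thesis
      using integral_ab_nonneg[of 1 r] by simp
  qed
qed

definition psi_integrand :: "nat \<Rightarrow> real \<Rightarrow> (real \<Rightarrow> real) \<Rightarrow> real \<Rightarrow> real" where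
  "psi_integrand n \<gamma> \<phi> s = \<phi> s / s * psi n s powr (- \<gamma>)"

definition psi_profile :: "nat \<Rightarrow> real \<Rightarrow> (real \<Rightarrow> real) \<Rightarrow> real \<Rightarrow> real \<Rightarrow> real" where
  "psi_profile n \<gamma> \<phi> \<beta> r = psi n r powr \<gamma> * ((LBINT s=1..r. psi_integrand n \<gamma> \<phi> s) + \<beta>)"

lemma continuous_on_psi_integrand:
  "continuous_on {0<..} \<phi> \<Longrightarrow> continuous_on {0<..} (psi_integrand n \<gamma> \<phi>)"
  unfolding psi_integrand_def[abs_def]
  by (intro continuous_intros continuous_on_psi_powr) auto

lemma has_real_derivative_psi_primitive:
  fixes r :: real
  assumes "continuous_on {0<..} \<phi>" "0 < r"
  shows "((\<lambda>r. LBINT s=1..r. psi_integrand n \<gamma> \<phi> s) has_real_derivative psi_integrand n \<gamma> \<phi> r) (at r)"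
  using has_real_derivative_interval_integral[OF continuous_on_psi_integrand[OF assms(1)], of 1 r] assms(2)
  by (simp add: one_ereal_def)

lemma psi_primitive_bounds:
  fixes r :: real
  assumes cont: "continuous_on {0<..} \<phi>" and nonneg: "\<And>s. 0 \<le> s \<Longrightarrow> 0 \<le> \<phi> s"
    and int: "psi_integrand n \<gamma> \<phi> integrable_on {0..1}" and r: "0 < r"
  shows "- integral {0..1} (psi_integrand n \<gamma> \<phi>) \<le> (LBINT s=1..r. psi_integrand n \<gamma> \<phi> s)"
    and "r \<le> 1 \<Longrightarrow> (LBINT s=1..r. psi_integrand n \<gamma> \<phi> s) \<le> 0"
  using interval_integral_from_one_bounds[OF continuous_on_psi_integrand[OF cont] _ int r] nonneg
  by (auto simp: psi_integrand_def)

lemma psi_profile_C1: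
  assumes cont: "continuous_on {0<..} \<phi>"
  shows "\<exists>f'. (\<forall>r>0. (psi_profile n \<gamma> \<phi> \<beta> has_real_derivative f' r) (at r))
               \<and> continuous_on {0<..} f'"
proof -
  define G where "G r = (LBINT s=1..r. psi_integrand n \<gamma> \<phi> s) + \<beta>" for r :: real
  define f' where "f' r = \<gamma> * psi_log_deriv n r * psi n r powr \<gamma> * G r
                          + psi_integrand n \<gamma> \<phi> r * psi n r powr \<gamma>" for r
  have G_deriv: "(G has_real_derivative psi_integrand n \<gamma> \<phi> r) (at r)" if "r > 0" for r
    unfolding G_def using has_real_derivative_psi_primitive[OF cont that]
    by (auto intro!: derivative_eq_intros)
  have deriv: "(psi_profile n \<gamma> \<phi> \<beta> has_real_derivative f' r) (at r)" if "r > 0" for r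
    unfolding psi_profile_def[abs_def] G_def[symmetric] f'_def
    by (rule DERIV_mult[OF has_real_derivative_psi_powr[OF that] G_deriv[OF that]])
  have "continuous_on {0<..} G"
    using G_deriv by (intro continuous_at_imp_continuous_on ballI DERIV_isCont) auto
  then have "continuous_on {0<..} f'"
    unfolding f'_def
    by (intro continuous_on_add continuous_on_mult continuous_on_const continuous_on_psi_powr
              continuous_on_psi_log_deriv continuous_on_psi_integrand cont)
  with deriv show ?thesis by blast
qed

lemma psi_profile_pos:
  fixes r :: real
  assumes cont: "continuous_on {0<..} \<phi>" and nonneg: "\<And>s. 0 \<le> s \<Longrightarrow> 0 \<le> \<phi> s"
    and int: "psi_integrand n \<gamma> \<phi> integrable_on {0..1}"
    and \<beta>: "integral {0..1} (psi_integrand n \<gamma> \<phi>) < \<beta>" and r: "0 < r"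
  shows "0 < psi_profile n \<gamma> \<phi> \<beta> r"
proof -
  have "0 < (LBINT s=1..r. psi_integrand n \<gamma> \<phi> s) + \<beta>"
    using psi_primitive_bounds(1)[OF cont nonneg int r] \<beta> by linarith
  then show ?thesis
    unfolding psi_profile_def using psi_pos[OF r, of n] by simp
qed

lemma psi_profile_tendsto_at_right_0:
  assumes n: "n \<ge> 1" and \<gamma>: "\<gamma> < 0"
    and cont: "continuous_on {0<..} \<phi>" and nonneg: "\<And>s. 0 \<le> s \<Longrightarrow> 0 \<le> \<phi> s"
    and int: "psi_integrand n \<gamma> \<phi> integrable_on {0..1}"
  shows "(psi_profile n \<gamma> \<phi> \<beta> \<longlongrightarrow> 0) (at_right 0)"
proof (rule Lim_null_comparison)
  define C where "C = integral {0..1} (psi_integrand n \<gamma> \<phi>) + \<bar>\<beta>\<bar>"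
  show "((\<lambda>r. psi n r powr \<gamma> * C) \<longlongrightarrow> 0) (at_right 0)"
    using tendsto_neg_powr[OF \<gamma> filterlim_psi_at_right_0[OF n]] by (rule tendsto_mult_left_zero)
  have "\<forall>\<^sub>F r in at_right 0. r \<in> {0<..<1::real}"
    by (rule eventually_at_right_real) simp
  then show "\<forall>\<^sub>F r in at_right 0. norm (psi_profile n \<gamma> \<phi> \<beta> r) \<le> psi n r powr \<gamma> * C"
  proof eventually_elim
    case (elim r)
    then have "\<bar>(LBINT s=1..r. psi_integrand n \<gamma> \<phi> s) + \<beta>\<bar> \<le> C"
      using psi_primitive_bounds[OF cont nonneg int, of r] unfolding C_def by auto
    then show ?case
      unfolding psi_profile_def by (simp add: abs_mult mult_left_mono)
  qed
qed

lemma tendsto_psi_integrand_over_deriv_psi_powr: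
  assumes \<gamma>: "\<gamma> < 0" and lim: "(\<phi> \<longlongrightarrow> l) at_top"
  shows "((\<lambda>r. psi_integrand n \<gamma> \<phi> r / (- \<gamma> * psi_log_deriv n r * psi n r powr (- \<gamma>)))
           \<longlongrightarrow> l / - \<gamma>) at_top"
proof -
  have "((\<lambda>r. \<phi> r * ((1 + r\<^sup>2) / (r\<^sup>2 - real n)) / - \<gamma>) \<longlongrightarrow> l * 1 / - \<gamma>) at_top"
    by (intro tendsto_intros lim) (use \<gamma> in \<open>simp_all, real_asymp\<close>)
  moreover have "\<forall>\<^sub>F r in at_top. \<phi> r * ((1 + r\<^sup>2) / (r\<^sup>2 - real n)) / - \<gamma>
                   = psi_integrand n \<gamma> \<phi> r / (- \<gamma> * psi_log_deriv n r * psi n r powr (- \<gamma>))"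
    using eventually_pos_square_gt_at_top[of "real n"]
  proof eventually_elim
    case (elim r)
    then show ?case
      using \<gamma> psi_pos[of r n]
      by (simp add: psi_integrand_def psi_log_deriv_def field_simps add_nonneg_eq_0_iff)
  qed
  ultimately show ?thesis
    by (auto elim: Lim_transform_eventually)
qed

lemma psi_profile_tendsto_at_top:
  assumes \<gamma>: "\<gamma> < 0" and cont: "continuous_on {0<..} \<phi>" and lim: "(\<phi> \<longlongrightarrow> l) at_top"
  shows "(psi_profile n \<gamma> \<phi> \<beta> \<longlongrightarrow> l / - \<gamma>) at_top"
proof -
  define w where "w r = psi n r powr (- \<gamma>)" for r
  have "((\<lambda>r. ((LBINT s=1..r. psi_integrand n \<gamma> \<phi> s) + \<beta>) / w r) \<longlongrightarrow> l / - \<gamma>) at_top"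
  proof (rule lhospital_at_top_at_top[OF _ _ _ _ tendsto_psi_integrand_over_deriv_psi_powr[OF \<gamma> lim]])
    show "filterlim w at_top at_top"
      unfolding w_def using \<gamma>
      by (intro filterlim_compose[OF real_powr_at_top filterlim_psi_at_top]) simp
    show "\<forall>\<^sub>F r in at_top. - \<gamma> * psi_log_deriv n r * psi n r powr (- \<gamma>) \<noteq> 0"
      using eventually_pos_square_gt_at_top[of "real n"]
    proof eventually_elim
      case (elim r)
      then show ?case
        using \<gamma> psi_pos[of r n] psi_log_deriv_pos[of r n] by simp
    qed
    show "\<forall>\<^sub>F r in at_top. ((\<lambda>r. (LBINT s=1..r. psi_integrand n \<gamma> \<phi> s) + \<beta>)
                               has_real_derivative psi_integrand n \<gamma> \<phi> r) (at r)"
      using eventually_gt_at_top[of 0]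
      by eventually_elim (auto intro!: derivative_eq_intros has_real_derivative_psi_primitive cont)
    show "\<forall>\<^sub>F r in at_top. (w has_real_derivative
                               - \<gamma> * psi_log_deriv n r * psi n r powr (- \<gamma>)) (at r)"
      using eventually_gt_at_top[of 0]
      by eventually_elim (unfold w_def[abs_def], rule has_real_derivative_psi_powr, simp)
  qed
  moreover have "\<forall>\<^sub>F r in at_top.
                   ((LBINT s=1..r. psi_integrand n \<gamma> \<phi> s) + \<beta>) / w r = psi_profile n \<gamma> \<phi> \<beta> r"
    by (simp add: psi_profile_def w_def powr_minus divide_inverse mult.commute)
  ultimately show ?thesis
    by (simp add: tendsto_cong)
qed

theorem lemma4p1:
  fixes n :: nat and p \<gamma> \<beta> phi_inf M :: real and \<phi> f :: "real \<Rightarrow> real"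
  assumes n: "n \<ge> 1"
    and p: "p < - real n - 1"
    and gamma_def: "\<gamma> = (p + real n + 1) / (real n + 1)"
    and phi_cont: "continuous_on {0..} \<phi>"
    and phi_nonneg: "\<And>r. r \<ge> 0 \<Longrightarrow> \<phi> r \<ge> 0"
    and phi_pos: "\<And>r. r > 0 \<Longrightarrow> \<phi> r > 0"
    and phi_lim: "(\<phi> \<longlongrightarrow> phi_inf) at_top"
    and phi_inf_pos: "phi_inf > 0"
    and M_int: "(\<lambda>r. \<phi> r / r * psi n r powr (- \<gamma>)) integrable_on {0..1}"
    and M_def: "M = integral {0..1} (\<lambda>r. \<phi> r / r * psi n r powr (- \<gamma>))"
    and beta: "\<beta> > M"
    and f_def: "\<And>r. f r = psi n r powr \<gamma> *
        ((LBINT s=1..r. \<phi> s / s * psi n s powr (- \<gamma>)) + \<beta>)"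
  shows "(\<exists>f'. (\<forall>r>0. (f has_real_derivative f' r) (at r)) \<and> continuous_on {0<..} f')
    \<and> (\<forall>r>0. f r > 0)
    \<and> (f \<longlongrightarrow> 0) (at_right 0)
    \<and> (f \<longlongrightarrow> phi_inf / \<bar>\<gamma>\<bar>) at_top"
proof -
  have \<gamma>: "\<gamma> < 0"
    unfolding gamma_def using p by (simp add: divide_neg_pos)
  have f: "f = psi_profile n \<gamma> \<phi> \<beta>"
    by (rule ext) (simp add: f_def psi_profile_def psi_integrand_def)
  have cont: "continuous_on {0<..} \<phi>"
    by (rule continuous_on_subset[OF phi_cont]) auto
  have int: "psi_integrand n \<gamma> \<phi> integrable_on {0..1}"
    and M: "M = integral {0..1} (psi_integrand n \<gamma> \<phi>)"
    using M_int M_def by (simp_all add: psi_integrand_def[abs_def])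
  have "\<bar>\<gamma>\<bar> = - \<gamma>"
    using \<gamma> by simp
  then show ?thesis
    unfolding f
    using psi_profile_C1[OF cont] psi_profile_pos[OF cont phi_nonneg int] beta M
      psi_profile_tendsto_at_right_0[OF n \<gamma> cont phi_nonneg int]
      psi_profile_tendsto_at_top[OF \<gamma> cont phi_lim]
    by auto
qed

end
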